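(* Let $\mathbf{L}\in\{\mathbf{K}_D,\mathbf{KD}_D\}$. Let $\Gamma,\Delta$ be finite multisets of formulas, $p$ a propositional variable and $a$ an agent symbol. Then there exists a formula $A$ such that: (i) $\mathsf{V}(A)\subseteq\mathsf{V}(\Gamma\cup\Delta)\setminus\{p\}$ and $\mathsf{Agt}(A)\subseteq\mathsf{Agt}(\Gamma\cup\Delta)\setminus\{a\}$; (ii) $\mathsf{G}(\mathbf{L})\vdash\Gamma,A\Rightarrow\Delta$; (iii) for all finite multisets $\Pi,\Lambda$ of formulas with $p\notin\mathsf{V}(\Pi\cup\Lambda)$ and $a\notin\mathsf{Agt}(\Pi\cup\Lambda)$: if $\mathsf{G}(\mathbf{L})\vdash\Pi,\Gamma\Rightarrow\Delta,\Lambda$, then $\mathsf{G}(\mathbf{L})\vdash\Pi\Rightarrow A,\Lambda$.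
   Context: Language: fix a finite nonempty set $\mathsf{Agt}$ of agent symbols and a countable set $\mathsf{Prop}$ of propositional variables; $\mathsf{Grp}$ is the set of nonempty subsets of $\mathsf{Agt}$. Formulas: $\alpha::=p\mid\bot\mid\alpha\wedge\alpha\mid\alpha\vee\alpha\mid\alpha\rightarrow\alpha\mid\neg\alpha\mid D_G\alpha$ with $p\in\mathsf{Prop}$, $G\in\mathsf{Grp}$. $\mathsf{V}(\cdot)$ is the set of propositional variables occurring, $\mathsf{Agt}(\cdot)$ the set of agent symbols occurring (the union of all $G$ with $D_G$ occurring); for multisets these are unions. An outmost-boxed formula is one of the form $D_G\gamma$. Sequent calculi: a sequent $\Gamma\Rightarrow\Delta$ is a pair of finite multisets of formulas; $\mathsf{G}(\mathbf{L})\vdash S$ means $S$ is the root of a finite tree built from initial sequents by the rules. $\mathsf{G}(\mathbf{K}_D)$ has initial sequents $\Gamma,p\Rightarrow p,\Delta$ ($p\in\mathsf{Prop}$) and $\bot,\Gamma\Rightarrow\Delta$; the propositional rules: $(R\wedge)$ from $\Gamma\Rightarrow\Delta,\alpha_1$ and $\Gamma\Rightarrow\Delta,\alpha_2$ infer $\Gamma\Rightarrow\Delta,\alpha_1\wedge\alpha_2$; $(L\wedge)$ from $\alpha_1,\alpha_2,\Gamma\Rightarrow\Delta$ infer $\alpha_1\wedge\alpha_2,\Gamma\Rightarrow\Delta$; $(R\vee)$ from $\Gamma\Rightarrow\Delta,\alpha_1,\alpha_2$ infer $\Gamma\Rightarrow\Delta,\alpha_1\vee\alpha_2$; $(L\vee)$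 from $\alpha_1,\Gamma\Rightarrow\Delta$ and $\alpha_2,\Gamma\Rightarrow\Delta$ infer $\alpha_1\vee\alpha_2,\Gamma\Rightarrow\Delta$; $(R\rightarrow)$ from $\alpha_1,\Gamma\Rightarrow\Delta,\alpha_2$ infer $\Gamma\Rightarrow\Delta,\alpha_1\rightarrow\alpha_2$; $(L\rightarrow)$ from $\Gamma\Rightarrow\Delta,\alpha_1$ and $\alpha_2,\Gamma\Rightarrow\Delta$ infer $\alpha_1\rightarrow\alpha_2,\Gamma\Rightarrow\Delta$; $(R\neg)$ from $\alpha,\Gamma\Rightarrow\Delta$ infer $\Gamma\Rightarrow\Delta,\neg\alpha$; $(L\neg)$ from $\Gamma\Rightarrow\Delta,\alpha$ infer $\neg\alpha,\Gamma\Rightarrow\Delta$; and $(D_K)$: from $\alpha_1,\dots,\alpha_n\Rightarrow\beta$ ($n\ge0$) infer $\Sigma,D_{G_1}\alpha_1,\dots,D_{G_n}\alpha_n\Rightarrow D_G\beta,\Omega$, provided $G_i\subseteq G$ for all $i$, $\Sigma$ consists only of propositional variables, $\bot$, and formulas $D_H\gamma$ with $H\not\subseteq G$, and $\Omega$ consists only of propositional variables, $\bot$ and outmost-boxed formulas. $\mathsf{G}(\mathbf{KD}_D)$ adds $(D_D)$: from $\Gamma\Rightarrow$ (empty succedent) with $\Gamma$ nonempty infer $\Sigma,D_{\{a\}}\Gamma\Rightarrow\Omega$ ($a\in\mathsf{Agt}$, $D_{\{a\}}\Gamma=\{D_{\{a\}}\gamma:\gamma\in\Gamma\}$), provided $\Sigma$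 consists only of propositional variables, $\bot$, and formulas $D_H\gamma$ with $H\neq\{a\}$, and $\Omega$ only of propositional variables, $\bot$ and outmost-boxed formulas. *)

theory Defs
  imports Main "HOL-Library.Multiset" "HOL-Library.Countable"
begin

(* Formulas over propositional variables 'p (countable) and agent symbols 'a (a finite type,
   so Agt = UNIV :: 'a set is finite and nonempty). D G phi is the distributed-knowledge modality. *)
datatype ('p, 'a) fm =
    Var 'p
  | Bot
  | Conj "('p, 'a) fm" "('p, 'a) fm"
  | Disj "('p, 'a) fm" "('p, 'a) fm"
  | Imp "('p, 'a) fm" "('p, 'a) fm"
  | Neg "('p, 'a) fm"
  | D "'a set" "('p, 'a) fm"

fun wf :: "('p, 'a) fm \<Rightarrow> bool" where
  "wf (Var p) = True"
| "wf Bot = True"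
| "wf (Conj x y) = (wf x \<and> wf y)"
| "wf (Disj x y) = (wf x \<and> wf y)"
| "wf (Imp x y) = (wf x \<and> wf y)"
| "wf (Neg x) = wf x"
| "wf (D G x) = (G \<noteq> {} \<and> wf x)"

fun vars :: "('p, 'a) fm \<Rightarrow> 'p set" where
  "vars (Var p) = {p}"
| "vars Bot = {}"
| "vars (Conj x y) = vars x \<union> vars y"
| "vars (Disj x y) = vars x \<union> vars y"
| "vars (Imp x y) = vars x \<union> vars y"
| "vars (Neg x) = vars x"
| "vars (D G x) = vars x"

fun agts :: "('p, 'a) fm \<Rightarrow> 'a set" where
  "agts (Var p) = {}"
| "agts Bot = {}"
| "agts (Conj x y) = agts x \<union> agts y"
| "agts (Disj x y) = agts x \<union> agts y"
| "agts (Imp x y) = agts x \<union> agts y"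
| "agts (Neg x) = agts x"
| "agts (D G x) = G \<union> agts x"

definition varsM :: "('p, 'a) fm multiset \<Rightarrow> 'p set" where
  "varsM M = (\<Union>x\<in>set_mset M. vars x)"

definition agtsM :: "('p, 'a) fm multiset \<Rightarrow> 'a set" where
  "agtsM M = (\<Union>x\<in>set_mset M. agts x)"

fun boxed :: "('p, 'a) fm \<Rightarrow> bool" where
  "boxed (D G x) = True"
| "boxed _ = False"

definition omega_ok :: "('p, 'a) fm \<Rightarrow> bool" where
  "omega_ok x \<longleftrightarrow> (\<exists>q. x = Var q) \<or> x = Bot \<or> boxed x"

definition sigmaK_ok :: "'a set \<Rightarrow> ('p, 'a) fm \<Rightarrow> bool" where
  "sigmaK_ok G x \<longleftrightarrow> (\<exists>q. x = Var q) \<or> x = Bot \<or> (\<exists>H y. x = D H y \<and> \<not> H \<subseteq> G)"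

definition sigmaD_ok :: "'a \<Rightarrow> ('p, 'a) fm \<Rightarrow> bool" where
  "sigmaD_ok a x \<longleftrightarrow> (\<exists>q. x = Var q) \<or> x = Bot \<or> (\<exists>H y. x = D H y \<and> H \<noteq> {a})"

datatype logic = K_D | KD_D

inductive derivable :: "logic \<Rightarrow> ('p, 'a) fm multiset \<Rightarrow> ('p, 'a) fm multiset \<Rightarrow> bool"
  for L :: logic where
  init: "derivable L (add_mset (Var p) \<Gamma>) (add_mset (Var p) \<Delta>)"
| botL: "derivable L (add_mset Bot \<Gamma>) \<Delta>"
| conjR: "derivable L \<Gamma> (add_mset a1 \<Delta>) \<Longrightarrow> derivable L \<Gamma> (add_mset a2 \<Delta>)
          \<Longrightarrow> derivable L \<Gamma> (add_mset (Conj a1 a2) \<Delta>)"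
| conjL: "derivable L (add_mset a1 (add_mset a2 \<Gamma>)) \<Delta>
          \<Longrightarrow> derivable L (add_mset (Conj a1 a2) \<Gamma>) \<Delta>"
| disjR: "derivable L \<Gamma> (add_mset a1 (add_mset a2 \<Delta>))
          \<Longrightarrow> derivable L \<Gamma> (add_mset (Disj a1 a2) \<Delta>)"
| disjL: "derivable L (add_mset a1 \<Gamma>) \<Delta> \<Longrightarrow> derivable L (add_mset a2 \<Gamma>) \<Delta>
          \<Longrightarrow> derivable L (add_mset (Disj a1 a2) \<Gamma>) \<Delta>"
| impR: "derivable L (add_mset a1 \<Gamma>) (add_mset a2 \<Delta>)
          \<Longrightarrow> derivable L \<Gamma> (add_mset (Imp a1 a2) \<Delta>)"
| impL: "derivable L \<Gamma> (add_mset a1 \<Delta>) \<Longrightarrow> derivable L (add_mset a2 \<Gamma>) \<Delta>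
          \<Longrightarrow> derivable L (add_mset (Imp a1 a2) \<Gamma>) \<Delta>"
| negR: "derivable L (add_mset a \<Gamma>) \<Delta> \<Longrightarrow> derivable L \<Gamma> (add_mset (Neg a) \<Delta>)"
| negL: "derivable L \<Gamma> (add_mset a \<Delta>) \<Longrightarrow> derivable L (add_mset (Neg a) \<Gamma>) \<Delta>"
| DK: "derivable L (mset (map snd xs)) {#\<beta>#}
       \<Longrightarrow> (\<forall>(Gi, _) \<in> set xs. Gi \<subseteq> G)
       \<Longrightarrow> (\<forall>x \<in># \<Sigma>. sigmaK_ok G x)
       \<Longrightarrow> (\<forall>x \<in># \<Omega>. omega_ok x)
       \<Longrightarrow> derivable L (\<Sigma> + mset (map (\<lambda>(Gi, ai). D Gi ai) xs)) (add_mset (D G \<beta>) \<Omega>)"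
| DD: "L = KD_D \<Longrightarrow> derivable L \<Gamma>' {#} \<Longrightarrow> \<Gamma>' \<noteq> {#}
       \<Longrightarrow> (\<forall>x \<in># \<Sigma>. sigmaD_ok a x)
       \<Longrightarrow> (\<forall>x \<in># \<Omega>. omega_ok x)
       \<Longrightarrow> derivable L (\<Sigma> + image_mset (D {a}) \<Gamma>') \<Omega>"

end

theory Submission
  imports Defs
begin

(* Following Pitts, the interpolant A of \<Gamma> \<Rightarrow> \<Delta> is built by induction on the size of the
   sequent, assuming uniform interpolants of all smaller sequents.  Inspect the last rule of a
   derivation of \<Pi>, \<Gamma> \<Rightarrow> \<Delta>, \<Lambda> with \<Pi>, \<Lambda> free of p and a.  If it acts on \<Pi> \<Rightarrow> \<Lambda> alone, it is
   replayed on \<Pi> \<Rightarrow> A, \<Lambda>.  Otherwise its premises, restricted to \<Gamma> and \<Delta>, are smaller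
   sequents, and their interpolants B yield a formula C with \<Pi> \<Rightarrow> C, \<Lambda> and C, \<Gamma> \<Rightarrow> \<Delta>: the
   conjunction of the B for a propositional rule, D (G - {a}) B for a box D G \<beta> of \<Delta> introduced
   by (D_K), and \<not> D H \<not> B when boxes of \<Gamma> feed a box of \<Lambda>, with H = G \<inter> Agt(\<Gamma>) for (D_K)
   and H = {b} for (D_D).  Only finitely many such C arise, and A is their disjunction. *)

section \<open>Multisets\<close>

lemma mset_plus_eq_plus_split:
  assumes "A + B = C + (E :: 'x multiset)"
  obtains A1 A2 B1 B2 where "A = A1 + A2" "B = B1 + B2" "C = A1 + B1" "E = A2 + B2"
proof
  have count_eq: "count A y + count B y = count C y + count E y" for y
    using assms by (metis count_union)
  show "A = A \<inter># C + (A - C)" "C = A \<inter># C + (C - A)"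
    by (simp_all add: multiset_eq_iff min_def)
  have "count B y = count (C - A + (B - (C - A))) y \<and> count E y = count (A - C + (B - (C - A))) y" for y
    using count_eq[of y] by simp
  then show "B = (C - A) + (B - (C - A))" "E = (A - C) + (B - (C - A))"
    unfolding multiset_eq_iff by blast+
qed

lemma add_mset_eq_plus_cases:
  assumes "add_mset x S = \<Pi> + \<Gamma>"
  obtains (first) \<Pi>0 where "\<Pi> = add_mset x \<Pi>0" "S = \<Pi>0 + \<Gamma>"
    | (second) \<Gamma>0 where "\<Gamma> = add_mset x \<Gamma>0" "S = \<Pi> + \<Gamma>0"
proof (cases "x \<in># \<Pi>")
  case True
  then show ?thesis using assms first[of "\<Pi> - {#x#}"] by (metis add_mset_add_single add_right_imp_eq insert_DiffM union_mset_add_mset_left)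
next
  case False
  then have "x \<in># \<Gamma>" using assms by (metis union_iff union_single_eq_member)
  then show ?thesis using assms second[of "\<Gamma> - {#x#}"] by (metis add_mset_add_single add_right_imp_eq insert_DiffM union_mset_add_mset_right)
qed

lemma plus_eq_plus_image_mset_split:
  assumes "\<Sigma> + image_mset g M = \<Pi> + \<Gamma>"
  obtains \<Sigma>1 \<Sigma>2 M1 M2 where "\<Sigma> = \<Sigma>1 + \<Sigma>2" "M = M1 + M2"
    "\<Pi> = \<Sigma>1 + image_mset g M1" "\<Gamma> = \<Sigma>2 + image_mset g M2"
proof -
  obtain \<Sigma>1 \<Sigma>2 B1 B2 where "\<Sigma> = \<Sigma>1 + \<Sigma>2" "image_mset g M = B1 + B2" "\<Pi> = \<Sigma>1 + B1" "\<Gamma> = \<Sigma>2 + B2"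
    using mset_plus_eq_plus_split[OF assms] by blast
  with image_mset_eq_plusD[of g M B1 B2] that show ?thesis by blast
qed

lemma finite_submultisets: "finite {N. N \<subseteq># M}"
proof (rule finite_subset)
  show "{N. N \<subseteq># M} \<subseteq> (\<Union>n\<le>size M. multisets_of_size (set_mset M) n)"
    by (auto simp: multisets_of_size_def dest: mset_subset_eqD size_mset_mono)
qed auto

section \<open>Signatures and sizes of formulas\<close>

lemma varsM_simps [simp]:
  "varsM {#} = {}" "varsM (add_mset x M) = vars x \<union> varsM M" "varsM (M + N) = varsM M \<union> varsM N"
  by (auto simp: varsM_def)

lemma agtsM_simps [simp]:
  "agtsM {#} = {}" "agtsM (add_mset x M) = agts x \<union> agtsM M" "agtsM (M + N) = agtsM M \<union> agtsM N"
  by (auto simp: agtsM_def)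

lemma vars_subset_varsM: "x \<in># M \<Longrightarrow> vars x \<subseteq> varsM M"
  by (auto simp: varsM_def)

lemma agts_subset_agtsM: "x \<in># M \<Longrightarrow> agts x \<subseteq> agtsM M"
  by (auto simp: agtsM_def)

lemma varsM_boxes [simp]: "varsM (image_mset (case_prod D) M) = varsM (image_mset snd M)"
  by (force simp: varsM_def)

lemma agtsM_boxes [simp]:
  "agtsM (image_mset (case_prod D) M) = (\<Union>(G, _) \<in> set_mset M. G) \<union> agtsM (image_mset snd M)"
  by (force simp: agtsM_def)

definition msize :: "('p, 'a) fm multiset \<Rightarrow> nat" where
  "msize M = sum_mset (image_mset size M)"

lemma msize_simps [simp]:
  "msize {#} = 0" "msize (add_mset x M) = size x + msize M" "msize (M + N) = msize M + msize N"
  by (auto simp: msize_def)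

lemma msize_boxes [simp]: "msize (image_mset (case_prod D) M) = msize (image_mset snd M) + size M"
  by (induction M) auto

definition avoids :: "'p \<Rightarrow> 'a \<Rightarrow> ('p, 'a) fm \<Rightarrow> bool" where
  "avoids p a x \<longleftrightarrow> wf x \<and> p \<notin> vars x \<and> a \<notin> agts x"

lemma avoids_mset_iff:
  "(\<forall>x \<in># M. avoids p a x) \<longleftrightarrow> (\<forall>x \<in># M. wf x) \<and> p \<notin> varsM M \<and> a \<notin> agtsM M"
  by (auto simp: avoids_def varsM_def agtsM_def)

lemma avoids_simps [simp]:
  "avoids p a (Var q) \<longleftrightarrow> q \<noteq> p" "avoids p a Bot"
  "avoids p a (Conj y z) \<longleftrightarrow> avoids p a y \<and> avoids p a z"
  "avoids p a (Disj y z) \<longleftrightarrow> avoids p a y \<and> avoids p a z"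
  "avoids p a (Imp y z) \<longleftrightarrow> avoids p a y \<and> avoids p a z"
  "avoids p a (Neg y) \<longleftrightarrow> avoids p a y"
  "avoids p a (D G y) \<longleftrightarrow> G \<noteq> {} \<and> a \<notin> G \<and> avoids p a y"
  by (auto simp: avoids_def)

lemma avoids_boxes:
  "\<forall>x \<in># image_mset (case_prod D) M. avoids p a x \<Longrightarrow> \<forall>(H, y) \<in># M. H \<noteq> {} \<and> a \<notin> H \<and> avoids p a y"
  by (induction M) auto

lemma sigmaK_ok_antimono: "sigmaK_ok G x \<Longrightarrow> H \<subseteq> G \<Longrightarrow> sigmaK_ok H x"
  unfolding sigmaK_ok_def by blast

lemma sigmaD_ok_imp_sigmaK_ok: "sigmaD_ok b x \<Longrightarrow> wf x \<Longrightarrow> sigmaK_ok {b} x"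
  unfolding sigmaD_ok_def sigmaK_ok_def by (auto simp: subset_singleton_iff)

section \<open>Rules, induction and weakening\<close>

lemma derivable_DK:
  assumes "derivable L (image_mset snd M) {#\<beta>#}" "\<forall>(H, _) \<in># M. H \<subseteq> G"
    "\<forall>x \<in># \<Sigma>. sigmaK_ok G x" "\<forall>x \<in># \<Omega>. omega_ok x"
  shows "derivable L (\<Sigma> + image_mset (case_prod D) M) (add_mset (D G \<beta>) \<Omega>)"
proof -
  obtain xs where "M = mset xs" using ex_mset by metis
  then show ?thesis using derivable.DK[of L xs \<beta> G \<Sigma> \<Omega>] assms by (simp add: mset_map)
qed

(* The side formulas added by each premise of the rule with principal formula x; empty exactly
   when omega_ok x, so every use is guarded by \<not> omega_ok x. *)
fun left_premises :: "('p, 'a) fm \<Rightarrow> (('p, 'a) fm multiset \<times> ('p, 'a) fm multiset) list" where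
  "left_premises (Conj y z) = [({#y, z#}, {#})]"
| "left_premises (Disj y z) = [({#y#}, {#}), ({#z#}, {#})]"
| "left_premises (Imp y z) = [({#}, {#y#}), ({#z#}, {#})]"
| "left_premises (Neg y) = [({#}, {#y#})]"
| "left_premises _ = []"

fun right_premises :: "('p, 'a) fm \<Rightarrow> (('p, 'a) fm multiset \<times> ('p, 'a) fm multiset) list" where
  "right_premises (Conj y z) = [({#}, {#y#}), ({#}, {#z#})]"
| "right_premises (Disj y z) = [({#}, {#y, z#})]"
| "right_premises (Imp y z) = [({#y#}, {#z#})]"
| "right_premises (Neg y) = [({#y#}, {#})]"
| "right_premises _ = []"

lemma premises_subformulas:
  assumes "(\<Gamma>', \<Delta>') \<in> set (left_premises x) \<union> set (right_premises x)"
  shows "msize (\<Gamma>' + \<Delta>') < size x" and "varsM (\<Gamma>' + \<Delta>') \<subseteq> vars x"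
    and "agtsM (\<Gamma>' + \<Delta>') \<subseteq> agts x" and "wf x \<Longrightarrow> \<forall>y \<in># \<Gamma>' + \<Delta>'. wf y"
  using assms by (cases x; auto)+

lemma avoids_premises:
  assumes "(\<Gamma>', \<Delta>') \<in> set (left_premises x) \<union> set (right_premises x)" "avoids p a x"
  shows "\<forall>y \<in># \<Gamma>' + \<Delta>'. avoids p a y"
  using assms by (cases x) auto

lemma derivable_left_rule:
  assumes "\<not> omega_ok x"
    and "\<forall>(\<Gamma>', \<Delta>') \<in> set (left_premises x). derivable L (\<Gamma>' + \<Gamma>) (\<Delta>' + \<Delta>)"
  shows "derivable L (add_mset x \<Gamma>) \<Delta>"
  using assms by (cases x) (auto simp: omega_ok_def intro: derivable.intros)

lemma derivable_right_rule:
  assumes "\<not> omega_ok x"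
    and "\<forall>(\<Gamma>', \<Delta>') \<in> set (right_premises x). derivable L (\<Gamma>' + \<Gamma>) (\<Delta>' + \<Delta>)"
  shows "derivable L \<Gamma> (add_mset x \<Delta>)"
  using assms by (cases x) (auto simp: omega_ok_def intro: derivable.intros)

lemma derivable_induct [consumes 1, case_names init botL left right DK DD]:
  assumes "derivable L \<Gamma> \<Delta>"
    and "\<And>q \<Gamma> \<Delta>. P (add_mset (Var q) \<Gamma>) (add_mset (Var q) \<Delta>)"
    and "\<And>\<Gamma> \<Delta>. P (add_mset Bot \<Gamma>) \<Delta>"
    and "\<And>x \<Gamma> \<Delta>. \<not> omega_ok x \<Longrightarrow> \<forall>(\<Gamma>', \<Delta>') \<in> set (left_premises x).
           derivable L (\<Gamma>' + \<Gamma>) (\<Delta>' + \<Delta>) \<and> P (\<Gamma>' + \<Gamma>) (\<Delta>' + \<Delta>) \<Longrightarrow> P (add_mset x \<Gamma>) \<Delta>"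
    and "\<And>x \<Gamma> \<Delta>. \<not> omega_ok x \<Longrightarrow> \<forall>(\<Gamma>', \<Delta>') \<in> set (right_premises x).
           derivable L (\<Gamma>' + \<Gamma>) (\<Delta>' + \<Delta>) \<and> P (\<Gamma>' + \<Gamma>) (\<Delta>' + \<Delta>) \<Longrightarrow> P \<Gamma> (add_mset x \<Delta>)"
    and "\<And>M \<beta> G \<Sigma> \<Omega>. derivable L (image_mset snd M) {#\<beta>#} \<Longrightarrow> P (image_mset snd M) {#\<beta>#} \<Longrightarrow>
           \<forall>(H, _) \<in># M. H \<subseteq> G \<Longrightarrow> \<forall>x \<in># \<Sigma>. sigmaK_ok G x \<Longrightarrow> \<forall>x \<in># \<Omega>. omega_ok x \<Longrightarrow>
           P (\<Sigma> + image_mset (case_prod D) M) (add_mset (D G \<beta>) \<Omega>)"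
    and "\<And>\<Gamma>' \<Sigma> b \<Omega>. L = KD_D \<Longrightarrow> derivable L \<Gamma>' {#} \<Longrightarrow> P \<Gamma>' {#} \<Longrightarrow> \<Gamma>' \<noteq> {#} \<Longrightarrow>
           \<forall>x \<in># \<Sigma>. sigmaD_ok b x \<Longrightarrow> \<forall>x \<in># \<Omega>. omega_ok x \<Longrightarrow>
           P (\<Sigma> + image_mset (D {b}) \<Gamma>') \<Omega>"
  shows "P \<Gamma> \<Delta>"
  using assms(1)
proof (induction rule: derivable.induct)
  case (init p \<Gamma> \<Delta>)
  then show ?case by (rule assms(2))
next
  case (botL \<Gamma> \<Delta>)
  then show ?case by (rule assms(3))
next
  case (conjR \<Gamma> a1 \<Delta> a2)
  then show ?case using assms(5)[of "Conj a1 a2" \<Gamma> \<Delta>] by (auto simp: omega_ok_def)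
next
  case (conjL a1 a2 \<Gamma> \<Delta>)
  then show ?case using assms(4)[of "Conj a1 a2" \<Gamma> \<Delta>] by (auto simp: omega_ok_def)
next
  case (disjR \<Gamma> a1 a2 \<Delta>)
  then show ?case using assms(5)[of "Disj a1 a2" \<Gamma> \<Delta>] by (auto simp: omega_ok_def)
next
  case (disjL a1 \<Gamma> \<Delta> a2)
  then show ?case using assms(4)[of "Disj a1 a2" \<Gamma> \<Delta>] by (auto simp: omega_ok_def)
next
  case (impR a1 \<Gamma> a2 \<Delta>)
  then show ?case using assms(5)[of "Imp a1 a2" \<Gamma> \<Delta>] by (auto simp: omega_ok_def)
next
  case (impL \<Gamma> a1 \<Delta> a2)
  then show ?case using assms(4)[of "Imp a1 a2" \<Gamma> \<Delta>] by (auto simp: omega_ok_def)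
next
  case (negR a \<Gamma> \<Delta>)
  then show ?case using assms(5)[of "Neg a" \<Gamma> \<Delta>] by (auto simp: omega_ok_def)
next
  case (negL \<Gamma> a \<Delta>)
  then show ?case using assms(4)[of "Neg a" \<Gamma> \<Delta>] by (auto simp: omega_ok_def)
next
  case (DK xs \<beta> G \<Sigma> \<Omega>)
  then show ?case using assms(6)[of "mset xs" \<beta> G \<Sigma> \<Omega>] by (simp add: mset_map)
next
  case (DD \<Gamma>' \<Sigma> b \<Omega>)
  then show ?case by (intro assms(7))
qed

lemma derivable_weaken_R_omega:
  assumes "derivable L \<Gamma> \<Delta>" "omega_ok x"
  shows "derivable L \<Gamma> (add_mset x \<Delta>)"
  using assms(1)
proof (induction rule: derivable_induct)
  case (init q \<Gamma> \<Delta>)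
  then show ?case by (metis derivable.init add_mset_commute)
next
  case (botL \<Gamma> \<Delta>)
  then show ?case by (rule derivable.botL)
next
  case (left y \<Gamma> \<Delta>)
  then show ?case by (intro derivable_left_rule) auto
next
  case (right y \<Gamma> \<Delta>)
  then have "derivable L \<Gamma> (add_mset y (add_mset x \<Delta>))" by (intro derivable_right_rule) auto
  then show ?case by (simp add: add_mset_commute)
next
  case (DK M \<beta> G \<Sigma> \<Omega>)
  then show ?case using derivable_DK[of L M \<beta> G \<Sigma> "add_mset x \<Omega>"] assms(2)
    by (simp add: add_mset_commute)
next
  case (DD \<Gamma>' \<Sigma> b \<Omega>)
  then show ?case using assms(2) by (intro derivable.DD) auto
qed

(* Weakening by a box may have to be pushed into the premise of (D_K) or (D_D) as weakening by
   its body, hence the hypothesis on D H y. *)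
lemma derivable_weaken_L_omega:
  assumes "derivable L \<Gamma> \<Delta>" "omega_ok x"
    and unboxed: "\<And>H y \<Gamma> \<Delta>. x = D H y \<Longrightarrow> derivable L \<Gamma> \<Delta> \<Longrightarrow> derivable L (add_mset y \<Gamma>) \<Delta>"
  shows "derivable L (add_mset x \<Gamma>) \<Delta>"
  using assms(1)
proof (induction rule: derivable_induct)
  case (init q \<Gamma> \<Delta>)
  then show ?case by (metis derivable.init add_mset_commute)
next
  case (botL \<Gamma> \<Delta>)
  then show ?case by (metis derivable.botL add_mset_commute)
next
  case (left y \<Gamma> \<Delta>)
  then have "derivable L (add_mset y (add_mset x \<Gamma>)) \<Delta>" by (intro derivable_left_rule) auto
  then show ?case by (simp add: add_mset_commute)
next
  case (right y \<Gamma> \<Delta>)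
  then show ?case by (intro derivable_right_rule) auto
next
  case (DK M \<beta> G \<Sigma> \<Omega>)
  show ?case
  proof (cases "\<exists>H y. x = D H y \<and> H \<subseteq> G")
    case True
    then obtain H y where "x = D H y" "H \<subseteq> G" by blast
    then show ?thesis
      using DK unboxed derivable_DK[of L "add_mset (H, y) M" \<beta> G \<Sigma> \<Omega>] by auto
  next
    case False
    with \<open>omega_ok x\<close> have "sigmaK_ok G x" by (auto simp: omega_ok_def sigmaK_ok_def elim: boxed.elims)
    then show ?thesis using DK derivable_DK[of L M \<beta> G "add_mset x \<Sigma>" \<Omega>] by auto
  qed
next
  case (DD \<Gamma>' \<Sigma> b \<Omega>)
  show ?case
  proof (cases "\<exists>y. x = D {b} y")
    case True
    then obtain y where "x = D {b} y" by blast
    then show ?thesis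
      using DD unboxed derivable.DD[of L "add_mset y \<Gamma>'" \<Sigma> b \<Omega>] by auto
  next
    case False
    with \<open>omega_ok x\<close> have "sigmaD_ok b x" by (auto simp: omega_ok_def sigmaD_ok_def elim: boxed.elims)
    then show ?thesis using DD derivable.DD[of L \<Gamma>' "add_mset x \<Sigma>" b \<Omega>] by auto
  qed
qed

lemma derivable_weaken:
  assumes "derivable L \<Gamma> \<Delta>"
  shows "derivable L (add_mset x \<Gamma>) \<Delta>" and "derivable L \<Gamma> (add_mset x \<Delta>)"
proof -
  have "\<forall>\<Gamma> \<Delta>. derivable L \<Gamma> \<Delta> \<longrightarrow> derivable L (add_mset x \<Gamma>) \<Delta> \<and> derivable L \<Gamma> (add_mset x \<Delta>)"
  proof (induction x)
    case (Conj y z)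
    then show ?case by (metis derivable.conjL derivable.conjR)
  next
    case (Disj y z)
    then show ?case by (metis derivable.disjL derivable.disjR)
  next
    case (Imp y z)
    then show ?case by (metis derivable.impL derivable.impR)
  next
    case (Neg y)
    then show ?case by (metis derivable.negL derivable.negR)
  qed (auto intro: derivable_weaken_L_omega derivable_weaken_R_omega simp: omega_ok_def)
  then show "derivable L (add_mset x \<Gamma>) \<Delta>" "derivable L \<Gamma> (add_mset x \<Delta>)"
    using assms by blast+
qed

definition Conjs :: "('p, 'a) fm list \<Rightarrow> ('p, 'a) fm" where
  "Conjs xs = foldr Conj xs (Neg Bot)"

definition Disjs :: "('p, 'a) fm list \<Rightarrow> ('p, 'a) fm" where
  "Disjs xs = foldr Disj xs Bot"

lemma Conjs_simps [simp]:
  "wf (Conjs xs) \<longleftrightarrow> (\<forall>x \<in> set xs. wf x)" "vars (Conjs xs) = (\<Union>x \<in> set xs. vars x)"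
  "agts (Conjs xs) = (\<Union>x \<in> set xs. agts x)"
  by (induction xs) (auto simp: Conjs_def)

lemma Disjs_simps [simp]:
  "wf (Disjs xs) \<longleftrightarrow> (\<forall>x \<in> set xs. wf x)" "vars (Disjs xs) = (\<Union>x \<in> set xs. vars x)"
  "agts (Disjs xs) = (\<Union>x \<in> set xs. agts x)"
  by (induction xs) (auto simp: Disjs_def)

lemma derivable_Conjs_L:
  "x \<in> set xs \<Longrightarrow> derivable L (add_mset x \<Gamma>) \<Delta> \<Longrightarrow> derivable L (add_mset (Conjs xs) \<Gamma>) \<Delta>"
proof (induction xs arbitrary: \<Gamma>)
  case (Cons y xs)
  then have "derivable L (add_mset y (add_mset (Conjs xs) \<Gamma>)) \<Delta>"
    by (metis add_mset_commute derivable_weaken(1) set_ConsD)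
  then show ?case unfolding Conjs_def by (simp add: derivable.conjL)
qed simp

lemma derivable_Conjs_R:
  "\<forall>x \<in> set xs. derivable L \<Gamma> (add_mset x \<Delta>) \<Longrightarrow> derivable L \<Gamma> (add_mset (Conjs xs) \<Delta>)"
  by (induction xs) (auto simp: Conjs_def intro: derivable.intros)

lemma derivable_Disjs_L:
  "\<forall>x \<in> set xs. derivable L (add_mset x \<Gamma>) \<Delta> \<Longrightarrow> derivable L (add_mset (Disjs xs) \<Gamma>) \<Delta>"
  by (induction xs) (auto simp: Disjs_def intro: derivable.intros)

lemma derivable_Disjs_R:
  "x \<in> set xs \<Longrightarrow> derivable L \<Gamma> (add_mset x \<Delta>) \<Longrightarrow> derivable L \<Gamma> (add_mset (Disjs xs) \<Delta>)"
proof (induction xs arbitrary: \<Delta>)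
  case (Cons y xs)
  then have "derivable L \<Gamma> (add_mset y (add_mset (Disjs xs) \<Delta>))"
    by (metis add_mset_commute derivable_weaken(2) set_ConsD)
  then show ?case unfolding Disjs_def by (simp add: derivable.disjR)
qed simp

section \<open>The interpolant of one sequent\<close>

definition uniform_interpolant ::
    "logic \<Rightarrow> 'p \<Rightarrow> 'a \<Rightarrow> ('p, 'a) fm multiset \<Rightarrow> ('p, 'a) fm multiset \<Rightarrow> ('p, 'a) fm \<Rightarrow> bool" where
  "uniform_interpolant L p a \<Gamma> \<Delta> A \<longleftrightarrow> wf A
    \<and> vars A \<subseteq> varsM (\<Gamma> + \<Delta>) - {p} \<and> agts A \<subseteq> agtsM (\<Gamma> + \<Delta>) - {a}
    \<and> derivable L (add_mset A \<Gamma>) \<Delta>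
    \<and> (\<forall>\<Pi> \<Lambda>. (\<forall>x \<in># \<Pi> + \<Lambda>. avoids p a x) \<longrightarrow> derivable L (\<Pi> + \<Gamma>) (\<Delta> + \<Lambda>)
          \<longrightarrow> derivable L \<Pi> (add_mset A \<Lambda>))"

locale interpolant_step =
  fixes L :: logic and p :: 'p and a :: "'a::finite"
    and \<Gamma> \<Delta> :: "('p, 'a) fm multiset"
    and f :: "('p, 'a) fm multiset \<Rightarrow> ('p, 'a) fm multiset \<Rightarrow> ('p, 'a) fm"
  assumes wf_sequent: "\<forall>x \<in># \<Gamma> + \<Delta>. wf x"
    and uniform_interpolant_smaller: "\<And>\<Gamma>' \<Delta>'. msize (\<Gamma>' + \<Delta>') < msize (\<Gamma> + \<Delta>) \<Longrightarrow>
      \<forall>x \<in># \<Gamma>' + \<Delta>'. wf x \<Longrightarrow> uniform_interpolant L p a \<Gamma>' \<Delta>' (f \<Gamma>' \<Delta>')"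
begin

definition in_signature :: "('p, 'a) fm \<Rightarrow> bool" where
  "in_signature x \<longleftrightarrow> wf x \<and> vars x \<subseteq> varsM (\<Gamma> + \<Delta>) - {p} \<and> agts x \<subseteq> agtsM (\<Gamma> + \<Delta>) - {a}"

definition smaller :: "('p, 'a) fm multiset \<Rightarrow> ('p, 'a) fm multiset \<Rightarrow> bool" where
  "smaller \<Gamma>' \<Delta>' \<longleftrightarrow> msize (\<Gamma>' + \<Delta>') < msize (\<Gamma> + \<Delta>) \<and> (\<forall>x \<in># \<Gamma>' + \<Delta>'. wf x)
     \<and> varsM (\<Gamma>' + \<Delta>') \<subseteq> varsM (\<Gamma> + \<Delta>) \<and> agtsM (\<Gamma>' + \<Delta>') \<subseteq> agtsM (\<Gamma> + \<Delta>)"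

lemma
  assumes "smaller \<Gamma>' \<Delta>'"
  shows smaller_in_signature: "in_signature (f \<Gamma>' \<Delta>')"
    and smaller_derivable: "derivable L (add_mset (f \<Gamma>' \<Delta>') \<Gamma>') \<Delta>'"
    and smaller_uniform: "\<forall>x \<in># \<Pi> + \<Lambda>. avoids p a x \<Longrightarrow> derivable L (\<Pi> + \<Gamma>') (\<Delta>' + \<Lambda>)
      \<Longrightarrow> derivable L \<Pi> (add_mset (f \<Gamma>' \<Delta>') \<Lambda>)"
  using assms uniform_interpolant_smaller[of \<Gamma>' \<Delta>']
  unfolding smaller_def in_signature_def uniform_interpolant_def by blast+

lemma smaller_premise:
  assumes "(\<Gamma>', \<Delta>') \<in> set (left_premises x) \<union> set (right_premises x)"
    and "\<Gamma> + \<Delta> = add_mset x (\<Gamma>0 + \<Delta>0)"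
  shows "smaller (\<Gamma>' + \<Gamma>0) (\<Delta>' + \<Delta>0)"
  using premises_subformulas[OF assms(1)] wf_sequent unfolding smaller_def assms(2)
  by (auto simp: ac_simps)

lemma smaller_boxes:
  assumes "\<Gamma> = \<Sigma> + image_mset (case_prod D) M" "\<Delta> = \<Delta>0 + image_mset (case_prod D) N" "M + N \<noteq> {#}"
  shows "smaller (image_mset snd M) (image_mset snd N)"
proof -
  have "size M + size N > 0" using assms(3) by (simp add: nonempty_has_size)
  then have "msize (image_mset snd M + image_mset snd N) < msize (\<Gamma> + \<Delta>)"
    using assms(1,2) by auto
  moreover have "wf y" if "(G, y) \<in># M + N" for G y
  proof -
    have "D G y \<in># \<Gamma> + \<Delta>" using that assms(1,2) by force
    then show ?thesis using wf_sequent by fastforce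
  qed
  then have "\<forall>x \<in># image_mset snd M + image_mset snd N. wf x" by force
  ultimately show ?thesis using assms(1,2) unfolding smaller_def by auto
qed

definition left_rule_component :: "('p, 'a) fm \<Rightarrow> ('p, 'a) fm" where
  "left_rule_component x = Conjs [f (\<Gamma>' + (\<Gamma> - {#x#})) (\<Delta>' + \<Delta>). (\<Gamma>', \<Delta>') \<leftarrow> left_premises x]"

definition right_rule_component :: "('p, 'a) fm \<Rightarrow> ('p, 'a) fm" where
  "right_rule_component x = Conjs [f (\<Gamma>' + \<Gamma>) (\<Delta>' + (\<Delta> - {#x#})). (\<Gamma>', \<Delta>') \<leftarrow> right_premises x]"

(* Instances of (D_K) whose principal box D G \<beta> lies in \<Lambda> and whose boxes from \<Gamma> are M,
   with groups inside H \<subseteq> G. *)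
definition left_box_instance :: "'a set \<Rightarrow> ('a set \<times> ('p, 'a) fm) multiset \<Rightarrow> bool" where
  "left_box_instance H M \<longleftrightarrow> H \<noteq> {} \<and> a \<notin> H \<and> H \<subseteq> agtsM \<Gamma> \<and> M \<noteq> {#} \<and> (\<forall>(G, _) \<in># M. G \<subseteq> H)
     \<and> (\<exists>\<Sigma>. \<Gamma> = \<Sigma> + image_mset (case_prod D) M \<and> (\<forall>x \<in># \<Sigma>. sigmaK_ok H x)) \<and> (\<forall>x \<in># \<Delta>. omega_ok x)"

definition left_box_component :: "'a set \<Rightarrow> ('a set \<times> ('p, 'a) fm) multiset \<Rightarrow> ('p, 'a) fm" where
  "left_box_component H M = Neg (D H (Neg (f (image_mset snd M) {#})))"

definition right_box_instance :: "'a set \<Rightarrow> ('p, 'a) fm \<Rightarrow> ('a set \<times> ('p, 'a) fm) multiset \<Rightarrow> bool" where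
  "right_box_instance G \<beta> M \<longleftrightarrow> G - {a} \<noteq> {} \<and> (\<forall>(H, _) \<in># M. H \<subseteq> G)
     \<and> (\<exists>\<Sigma>. \<Gamma> = \<Sigma> + image_mset (case_prod D) M \<and> (\<forall>x \<in># \<Sigma>. sigmaK_ok G x))
     \<and> (\<exists>\<Delta>0. \<Delta> = add_mset (D G \<beta>) \<Delta>0 \<and> (\<forall>x \<in># \<Delta>0. omega_ok x))"

definition right_box_component :: "'a set \<Rightarrow> ('p, 'a) fm \<Rightarrow> ('a set \<times> ('p, 'a) fm) multiset \<Rightarrow> ('p, 'a) fm" where
  "right_box_component G \<beta> M = D (G - {a}) (f (image_mset snd M) {#\<beta>#})"

(* One component for each way in which the last rule of a derivation of \<Pi>, \<Gamma> \<Rightarrow> \<Delta>, \<Lambda> can involve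
   \<Gamma> \<Rightarrow> \<Delta>; the component Neg Bot covers derivations of \<Gamma> \<Rightarrow> \<Delta> alone. *)
definition components :: "('p, 'a) fm set" where
  "components = (if derivable L \<Gamma> \<Delta> then {Neg Bot} else {})
    \<union> {Neg (Var q) | q. Var q \<in># \<Gamma> \<and> q \<noteq> p} \<union> {Var q | q. Var q \<in># \<Delta> \<and> q \<noteq> p}
    \<union> {left_rule_component x | x. x \<in># \<Gamma> \<and> \<not> omega_ok x}
    \<union> {right_rule_component x | x. x \<in># \<Delta> \<and> \<not> omega_ok x}
    \<union> {left_box_component H M | H M. left_box_instance H M}
    \<union> {right_box_component G \<beta> M | G \<beta> M. right_box_instance G \<beta> M}"

lemma left_box_instance_submset: "left_box_instance H M \<Longrightarrow> image_mset (case_prod D) M \<subseteq># \<Gamma>"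
  unfolding left_box_instance_def by (metis mset_subset_eq_add_right)

lemma right_box_instance_submset:
  "right_box_instance G \<beta> M \<Longrightarrow> image_mset (case_prod D) M \<subseteq># \<Gamma> \<and> D G \<beta> \<in># \<Delta>"
  unfolding right_box_instance_def by (metis mset_subset_eq_add_right union_single_eq_member add_mset_add_single)

lemma finite_components: "finite components"
proof -
  have "inj (image_mset (case_prod D))"
    by (rule multiset.inj_map) (auto simp: inj_def)
  then have boxes_in_\<Gamma>: "finite {M. image_mset (case_prod D) M \<subseteq># \<Gamma>}"
    using finite_vimageI[OF finite_submultisets] by (simp add: vimage_def)
  have boxes_in_\<Delta>: "finite (case_prod D -` set_mset \<Delta>)"
    by (rule finite_vimageI) (auto simp: inj_def)
  have "{left_box_component H M | H M. left_box_instance H M}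
      \<subseteq> case_prod left_box_component ` (UNIV \<times> {M. image_mset (case_prod D) M \<subseteq># \<Gamma>})"
    using left_box_instance_submset by blast
  then have "finite {left_box_component H M | H M. left_box_instance H M}"
    by (rule finite_subset) (intro finite_imageI finite_cartesian_product finite_UNIV boxes_in_\<Gamma>)
  moreover have "{right_box_component G \<beta> M | G \<beta> M. right_box_instance G \<beta> M}
      \<subseteq> (\<lambda>((G, \<beta>), M). right_box_component G \<beta> M) `
          (case_prod D -` set_mset \<Delta> \<times> {M. image_mset (case_prod D) M \<subseteq># \<Gamma>})"
  proof
    fix x assume "x \<in> {right_box_component G \<beta> M | G \<beta> M. right_box_instance G \<beta> M}"
    then obtain G \<beta> M where "x = right_box_component G \<beta> M" "right_box_instance G \<beta> M" by blast
    then show "x \<in> (\<lambda>((G, \<beta>), M). right_box_component G \<beta> M) `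
        (case_prod D -` set_mset \<Delta> \<times> {M. image_mset (case_prod D) M \<subseteq># \<Gamma>})"
      using right_box_instance_submset by (auto intro!: image_eqI[of _ _ "((G, \<beta>), M)"])
  qed
  then have "finite {right_box_component G \<beta> M | G \<beta> M. right_box_instance G \<beta> M}"
    by (rule finite_subset) (intro finite_imageI finite_cartesian_product boxes_in_\<Delta> boxes_in_\<Gamma>)
  moreover have "{Neg (Var q) | q. Var q \<in># \<Gamma> \<and> q \<noteq> p} \<subseteq> Neg ` set_mset \<Gamma>"
    "{Var q | q. Var q \<in># \<Delta> \<and> q \<noteq> p} \<subseteq> set_mset \<Delta>"
    "{left_rule_component x | x. x \<in># \<Gamma> \<and> \<not> omega_ok x} \<subseteq> left_rule_component ` set_mset \<Gamma>"
    "{right_rule_component x | x. x \<in># \<Delta> \<and> \<not> omega_ok x} \<subseteq> right_rule_component ` set_mset \<Delta>"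
    by auto
  ultimately show ?thesis
    unfolding components_def by (auto intro: finite_subset)
qed

definition candidate :: "('p, 'a) fm \<Rightarrow> bool" where
  "candidate x \<longleftrightarrow> in_signature x \<and> derivable L (add_mset x \<Gamma>) \<Delta>"

lemma in_signature_Conjs: "(\<forall>x \<in> set xs. in_signature x) \<Longrightarrow> in_signature (Conjs xs)"
  by (auto simp: in_signature_def)

lemma candidate_top: "derivable L \<Gamma> \<Delta> \<Longrightarrow> candidate (Neg Bot)"
  by (simp add: candidate_def in_signature_def derivable_weaken)

lemma candidate_Var_left: "Var q \<in># \<Gamma> \<Longrightarrow> q \<noteq> p \<Longrightarrow> candidate (Neg (Var q))"
  using derivable.init[of L q "\<Gamma> - {#Var q#}" \<Delta>] derivable.negL[of L \<Gamma> "Var q" \<Delta>]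
    vars_subset_varsM[of "Var q" \<Gamma>]
  by (auto simp: candidate_def in_signature_def)

lemma candidate_Var_right: "Var q \<in># \<Delta> \<Longrightarrow> q \<noteq> p \<Longrightarrow> candidate (Var q)"
  using derivable.init[of L q \<Gamma> "\<Delta> - {#Var q#}"] vars_subset_varsM[of "Var q" \<Delta>]
  by (auto simp: candidate_def in_signature_def)

lemma candidate_left_rule_component:
  assumes "x \<in># \<Gamma>" "\<not> omega_ok x"
  shows "candidate (left_rule_component x)"
proof -
  define \<Gamma>0 where "\<Gamma>0 = \<Gamma> - {#x#}"
  define C where "C = left_rule_component x"
  have \<Gamma>: "\<Gamma> = add_mset x \<Gamma>0" using assms(1) by (simp add: \<Gamma>0_def)
  have smaller: "smaller (\<Gamma>' + \<Gamma>0) (\<Delta>' + \<Delta>)" if "(\<Gamma>', \<Delta>') \<in> set (left_premises x)" for \<Gamma>' \<Delta>'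
    using smaller_premise[of \<Gamma>' \<Delta>' x \<Gamma>0 \<Delta>] that \<Gamma> by simp
  then have "in_signature C"
    unfolding C_def left_rule_component_def \<Gamma>0_def[symmetric]
    by (auto intro!: in_signature_Conjs smaller_in_signature)
  moreover have "derivable L (add_mset x (add_mset C \<Gamma>0)) \<Delta>"
  proof (rule derivable_left_rule[OF assms(2)], clarify)
    fix \<Gamma>' \<Delta>' assume "(\<Gamma>', \<Delta>') \<in> set (left_premises x)"
    then have "f (\<Gamma>' + \<Gamma>0) (\<Delta>' + \<Delta>) \<in> set [f (\<Gamma>' + \<Gamma>0) (\<Delta>' + \<Delta>). (\<Gamma>', \<Delta>') \<leftarrow> left_premises x]"
      by force
    then have "derivable L (add_mset C (\<Gamma>' + \<Gamma>0)) (\<Delta>' + \<Delta>)"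
      unfolding C_def left_rule_component_def \<Gamma>0_def[symmetric]
      using derivable_Conjs_L smaller_derivable[OF smaller] \<open>(\<Gamma>', \<Delta>') \<in> set (left_premises x)\<close> by blast
    then show "derivable L (\<Gamma>' + add_mset C \<Gamma>0) (\<Delta>' + \<Delta>)" by simp
  qed
  then have "derivable L (add_mset C \<Gamma>) \<Delta>" by (simp add: \<Gamma> add_mset_commute)
  ultimately show ?thesis unfolding candidate_def C_def by simp
qed

lemma candidate_right_rule_component:
  assumes "x \<in># \<Delta>" "\<not> omega_ok x"
  shows "candidate (right_rule_component x)"
proof -
  define \<Delta>0 where "\<Delta>0 = \<Delta> - {#x#}"
  define C where "C = right_rule_component x"
  have \<Delta>: "\<Delta> = add_mset x \<Delta>0" using assms(1) by (simp add: \<Delta>0_def)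
  have smaller: "smaller (\<Gamma>' + \<Gamma>) (\<Delta>' + \<Delta>0)" if "(\<Gamma>', \<Delta>') \<in> set (right_premises x)" for \<Gamma>' \<Delta>'
    using smaller_premise[of \<Gamma>' \<Delta>' x \<Gamma> \<Delta>0] that \<Delta> by simp
  then have "in_signature C"
    unfolding C_def right_rule_component_def \<Delta>0_def[symmetric]
    by (auto intro!: in_signature_Conjs smaller_in_signature)
  moreover have "derivable L (add_mset C \<Gamma>) (add_mset x \<Delta>0)"
  proof (rule derivable_right_rule[OF assms(2)], clarify)
    fix \<Gamma>' \<Delta>' assume "(\<Gamma>', \<Delta>') \<in> set (right_premises x)"
    then have "f (\<Gamma>' + \<Gamma>) (\<Delta>' + \<Delta>0) \<in> set [f (\<Gamma>' + \<Gamma>) (\<Delta>' + \<Delta>0). (\<Gamma>', \<Delta>') \<leftarrow> right_premises x]"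
      by force
    then have "derivable L (add_mset C (\<Gamma>' + \<Gamma>)) (\<Delta>' + \<Delta>0)"
      unfolding C_def right_rule_component_def \<Delta>0_def[symmetric]
      using derivable_Conjs_L smaller_derivable[OF smaller] \<open>(\<Gamma>', \<Delta>') \<in> set (right_premises x)\<close> by blast
    then show "derivable L (\<Gamma>' + add_mset C \<Gamma>) (\<Delta>' + \<Delta>0)" by simp
  qed
  then have "derivable L (add_mset C \<Gamma>) \<Delta>" by (simp add: \<Delta>)
  ultimately show ?thesis unfolding candidate_def C_def by simp
qed

lemma candidate_left_box_component:
  assumes "left_box_instance H M"
  shows "candidate (left_box_component H M)"
proof -
  obtain \<Sigma> where \<Gamma>: "\<Gamma> = \<Sigma> + image_mset (case_prod D) M" and \<Sigma>: "\<forall>x \<in># \<Sigma>. sigmaK_ok H x"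
    using assms unfolding left_box_instance_def by blast
  define B where "B = f (image_mset snd M) {#}"
  have smaller: "smaller (image_mset snd M) {#}"
    using smaller_boxes[OF \<Gamma>, of \<Delta> "{#}"] assms unfolding left_box_instance_def by simp
  have "derivable L (image_mset snd M) {#Neg B#}"
    using derivable.negR[OF smaller_derivable[OF smaller]] by (simp add: B_def)
  then have "derivable L \<Gamma> (add_mset (D H (Neg B)) \<Delta>)"
    unfolding \<Gamma> using assms \<Sigma> by (intro derivable_DK) (auto simp: left_box_instance_def)
  then have "derivable L (add_mset (left_box_component H M) \<Gamma>) \<Delta>"
    unfolding left_box_component_def B_def by (rule derivable.negL)
  moreover have "in_signature (left_box_component H M)"
    using smaller_in_signature[OF smaller] assms
    unfolding left_box_component_def left_box_instance_def in_signature_def by auto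
  ultimately show ?thesis unfolding candidate_def by simp
qed

lemma candidate_right_box_component:
  assumes "right_box_instance G \<beta> M"
  shows "candidate (right_box_component G \<beta> M)"
proof -
  obtain \<Sigma> \<Delta>0 where \<Gamma>: "\<Gamma> = \<Sigma> + image_mset (case_prod D) M" and \<Sigma>: "\<forall>x \<in># \<Sigma>. sigmaK_ok G x"
    and \<Delta>: "\<Delta> = add_mset (D G \<beta>) \<Delta>0" and \<Delta>0: "\<forall>x \<in># \<Delta>0. omega_ok x"
    using assms unfolding right_box_instance_def by blast
  define B where "B = f (image_mset snd M) {#\<beta>#}"
  have smaller: "smaller (image_mset snd M) {#\<beta>#}"
    using smaller_boxes[OF \<Gamma>, of \<Delta>0 "{#(G, \<beta>)#}"] \<Delta> by simp
  have "derivable L (\<Sigma> + image_mset (case_prod D) (add_mset (G - {a}, B) M)) (add_mset (D G \<beta>) \<Delta>0)"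
    using smaller_derivable[OF smaller] assms \<Sigma> \<Delta>0
    by (intro derivable_DK) (auto simp: B_def right_box_instance_def)
  then have "derivable L (add_mset (right_box_component G \<beta> M) \<Gamma>) \<Delta>"
    unfolding right_box_component_def B_def \<Gamma> \<Delta> by simp
  moreover have "in_signature (right_box_component G \<beta> M)"
    using smaller_in_signature[OF smaller] assms \<Delta>
    unfolding right_box_component_def right_box_instance_def in_signature_def by auto
  ultimately show ?thesis unfolding candidate_def by simp
qed

lemma candidate_components: "x \<in> components \<Longrightarrow> candidate x"
  unfolding components_def
  by (auto split: if_splits intro: candidate_top candidate_Var_left candidate_Var_right
      candidate_left_rule_component candidate_right_rule_component
      candidate_left_box_component candidate_right_box_component)

definition interpolant :: "('p, 'a) fm" where
  "interpolant = Disjs (SOME xs. set xs = components)"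

lemma set_components_list: "set (SOME xs. set xs = components) = components"
  using someI_ex[OF finite_list[OF finite_components]] .

lemma candidate_interpolant: "candidate interpolant"
  using candidate_components set_components_list
  unfolding interpolant_def candidate_def in_signature_def
  by (auto intro!: derivable_Disjs_L)

lemma derivable_interpolant_R:
  "x \<in> components \<Longrightarrow> derivable L \<Pi> (add_mset x \<Lambda>) \<Longrightarrow> derivable L \<Pi> (add_mset interpolant \<Lambda>)"
  unfolding interpolant_def using derivable_Disjs_R set_components_list by metis

lemma derivable_sequent_imp_interpolant_R:
  assumes "derivable L \<Gamma> \<Delta>"
  shows "derivable L \<Pi> (add_mset interpolant \<Lambda>)"
proof (rule derivable_interpolant_R)
  show "Neg Bot \<in> components" using assms unfolding components_def by simp
  show "derivable L \<Pi> (add_mset (Neg Bot) \<Lambda>)" by (intro derivable.negR derivable.botL)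
qed

lemma uniform_init:
  assumes \<Pi>\<Gamma>: "add_mset (Var q) S = \<Pi> + \<Gamma>" and \<Delta>\<Lambda>: "add_mset (Var q) T = \<Delta> + \<Lambda>"
    and avoids: "\<forall>x \<in># \<Pi> + \<Lambda>. avoids p a x"
  shows "derivable L \<Pi> (add_mset interpolant \<Lambda>)"
  using \<Pi>\<Gamma>
proof (cases rule: add_mset_eq_plus_cases)
  case \<Pi>: (first \<Pi>0)
  from \<Delta>\<Lambda> show ?thesis
  proof (cases rule: add_mset_eq_plus_cases)
    case (first \<Delta>0)
    have "q \<noteq> p" using avoids \<Pi> by simp
    then have "Var q \<in> components" unfolding components_def using first by simp
    moreover have "derivable L \<Pi> (add_mset (Var q) \<Lambda>)" unfolding \<Pi> by (rule derivable.init)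
    ultimately show ?thesis by (rule derivable_interpolant_R)
  next
    case (second \<Lambda>0)
    then show ?thesis unfolding \<Pi> by (metis derivable.init add_mset_commute)
  qed
next
  case \<Gamma>: (second \<Gamma>0)
  from \<Delta>\<Lambda> show ?thesis
  proof (cases rule: add_mset_eq_plus_cases)
    case (first \<Delta>0)
    then have "derivable L \<Gamma> \<Delta>" unfolding \<Gamma> by (simp add: derivable.init)
    then show ?thesis by (rule derivable_sequent_imp_interpolant_R)
  next
    case (second \<Lambda>0)
    have "q \<noteq> p" using avoids second by simp
    then have "Neg (Var q) \<in> components" unfolding components_def using \<Gamma> by simp
    moreover have "derivable L \<Pi> (add_mset (Neg (Var q)) \<Lambda>)"
      unfolding second by (intro derivable.negR derivable.init)
    ultimately show ?thesis by (rule derivable_interpolant_R)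
  qed
qed

lemma uniform_left_rule_principal_in_sequent:
  assumes \<Gamma>: "\<Gamma> = add_mset x \<Gamma>0" and "\<not> omega_ok x"
    and derivable_premises: "\<forall>(\<Gamma>', \<Delta>') \<in> set (left_premises x). derivable L (\<Pi> + (\<Gamma>' + \<Gamma>0)) ((\<Delta>' + \<Delta>) + \<Lambda>)"
    and avoids: "\<forall>y \<in># \<Pi> + \<Lambda>. avoids p a y"
  shows "derivable L \<Pi> (add_mset interpolant \<Lambda>)"
proof -
  have "\<Gamma> - {#x#} = \<Gamma>0" using \<Gamma> by simp
  have "left_rule_component x \<in> components" unfolding components_def using assms by auto
  moreover have "derivable L \<Pi> (add_mset (left_rule_component x) \<Lambda>)"
    unfolding left_rule_component_def \<open>\<Gamma> - {#x#} = \<Gamma>0\<close>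
  proof (intro derivable_Conjs_R ballI, clarsimp)
    fix \<Gamma>' \<Delta>' assume premise: "(\<Gamma>', \<Delta>') \<in> set (left_premises x)"
    then have "smaller (\<Gamma>' + \<Gamma>0) (\<Delta>' + \<Delta>)"
      using smaller_premise[of \<Gamma>' \<Delta>' x \<Gamma>0 \<Delta>] \<Gamma> by simp
    then show "derivable L \<Pi> (add_mset (f (\<Gamma>' + \<Gamma>0) (\<Delta>' + \<Delta>)) \<Lambda>)"
      using smaller_uniform avoids derivable_premises premise by blast
  qed
  ultimately show ?thesis by (rule derivable_interpolant_R)
qed

lemma uniform_right_rule_principal_in_sequent:
  assumes \<Delta>: "\<Delta> = add_mset x \<Delta>0" and "\<not> omega_ok x"
    and derivable_premises: "\<forall>(\<Gamma>', \<Delta>') \<in> set (right_premises x). derivable L (\<Pi> + (\<Gamma>' + \<Gamma>)) ((\<Delta>' + \<Delta>0) + \<Lambda>)"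
    and avoids: "\<forall>y \<in># \<Pi> + \<Lambda>. avoids p a y"
  shows "derivable L \<Pi> (add_mset interpolant \<Lambda>)"
proof -
  have "\<Delta> - {#x#} = \<Delta>0" using \<Delta> by simp
  have "right_rule_component x \<in> components" unfolding components_def using assms by auto
  moreover have "derivable L \<Pi> (add_mset (right_rule_component x) \<Lambda>)"
    unfolding right_rule_component_def \<open>\<Delta> - {#x#} = \<Delta>0\<close>
  proof (intro derivable_Conjs_R ballI, clarsimp)
    fix \<Gamma>' \<Delta>' assume premise: "(\<Gamma>', \<Delta>') \<in> set (right_premises x)"
    then have "smaller (\<Gamma>' + \<Gamma>) (\<Delta>' + \<Delta>0)"
      using smaller_premise[of \<Gamma>' \<Delta>' x \<Gamma> \<Delta>0] \<Delta> by simp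
    then show "derivable L \<Pi> (add_mset (f (\<Gamma>' + \<Gamma>) (\<Delta>' + \<Delta>0)) \<Lambda>)"
      using smaller_uniform avoids derivable_premises premise by blast
  qed
  ultimately show ?thesis by (rule derivable_interpolant_R)
qed

lemma uniform_DK_principal_in_sequent:
  assumes \<Pi>: "\<Pi> = \<Sigma>1 + image_mset (case_prod D) M1" and \<Gamma>: "\<Gamma> = \<Sigma>2 + image_mset (case_prod D) M2"
    and \<Delta>: "\<Delta> = add_mset (D G \<beta>) \<Delta>0"
    and premise: "derivable L (image_mset snd M1 + image_mset snd M2) {#\<beta>#}"
    and groups: "\<forall>(H, _) \<in># M1 + M2. H \<subseteq> G" and \<Sigma>: "\<forall>x \<in># \<Sigma>1 + \<Sigma>2. sigmaK_ok G x"
    and \<Omega>: "\<forall>x \<in># \<Delta>0 + \<Lambda>. omega_ok x" and avoids: "\<forall>x \<in># \<Pi> + \<Lambda>. avoids p a x"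
  shows "derivable L \<Pi> (add_mset interpolant \<Lambda>)"
proof -
  have M1: "\<forall>(H, y) \<in># M1. H \<noteq> {} \<and> a \<notin> H \<and> avoids p a y"
    using avoids \<Pi> avoids_boxes[of M1] by simp
  show ?thesis
  proof (cases "G - {a} = {}")
    case True
    \<comment> \<open>A box of \<Pi> has a nonempty group avoiding a, so it cannot lie inside G \<subseteq> {a}.\<close>
    have "M1 = {#}"
    proof (rule ccontr)
      assume "M1 \<noteq> {#}"
      then obtain H y where "(H, y) \<in># M1" by (metis multiset_nonemptyE surj_pair)
      then show False using True groups M1 by fastforce
    qed
    then have "derivable L \<Gamma> \<Delta>"
      unfolding \<Gamma> \<Delta> using premise groups \<Sigma> \<Omega> by (intro derivable_DK) auto
    then show ?thesis by (rule derivable_sequent_imp_interpolant_R)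
  next
    case False
    then have "right_box_instance G \<beta> M2"
      unfolding right_box_instance_def using \<Gamma> \<Delta> groups \<Sigma> \<Omega> by auto
    then have "right_box_component G \<beta> M2 \<in> components" unfolding components_def by blast
    moreover have "derivable L \<Pi> (add_mset (right_box_component G \<beta> M2) \<Lambda>)"
    proof -
      have smaller: "smaller (image_mset snd M2) {#\<beta>#}"
        using smaller_boxes[OF \<Gamma>, of \<Delta>0 "{#(G, \<beta>)#}"] \<Delta> by simp
      have "\<forall>y \<in># image_mset snd M1. avoids p a y" using M1 by auto
      then have "derivable L (image_mset snd M1) {#f (image_mset snd M2) {#\<beta>#}#}"
        using smaller_uniform[OF smaller, of "image_mset snd M1" "{#}"] premise by simp
      moreover have "\<forall>(H, _) \<in># M1. H \<subseteq> G - {a}" using groups M1 by auto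
      ultimately show ?thesis
        unfolding \<Pi> right_box_component_def
        using \<Sigma> \<Omega> sigmaK_ok_antimono[of G _ "G - {a}"] by (intro derivable_DK) auto
    qed
    ultimately show ?thesis by (rule derivable_interpolant_R)
  qed
qed

lemma uniform_DK_principal_in_context:
  assumes \<Pi>: "\<Pi> = \<Sigma>1 + image_mset (case_prod D) M1" and \<Gamma>: "\<Gamma> = \<Sigma>2 + image_mset (case_prod D) M2"
    and \<Lambda>: "\<Lambda> = add_mset (D G \<beta>) \<Lambda>0"
    and premise: "derivable L (image_mset snd M1 + image_mset snd M2) {#\<beta>#}"
    and groups: "\<forall>(H, _) \<in># M1 + M2. H \<subseteq> G" and \<Sigma>: "\<forall>x \<in># \<Sigma>1 + \<Sigma>2. sigmaK_ok G x"
    and \<Omega>: "\<forall>x \<in># \<Delta> + \<Lambda>0. omega_ok x" and avoids: "\<forall>x \<in># \<Pi> + \<Lambda>. avoids p a x"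
  shows "derivable L \<Pi> (add_mset interpolant \<Lambda>)"
proof (cases "M2 = {#}")
  case True
  then have "derivable L \<Pi> (add_mset (D G \<beta>) \<Lambda>0)"
    unfolding \<Pi> using premise groups \<Sigma> \<Omega> by (intro derivable_DK) auto
  then show ?thesis unfolding \<Lambda> by (metis derivable_weaken(2) add_mset_commute)
next
  case False
  \<comment> \<open>Restricting G to the agents of \<Gamma> keeps the component in the signature of \<Gamma> \<Rightarrow> \<Delta>.\<close>
  define H where "H = G \<inter> agtsM \<Gamma>"
  define B where "B = f (image_mset snd M2) {#}"
  have M1: "\<forall>(H, y) \<in># M1. H \<noteq> {} \<and> a \<notin> H \<and> avoids p a y"
    using avoids \<Pi> avoids_boxes[of M1] by simp
  have "a \<notin> G" "avoids p a \<beta>" using avoids \<Lambda> by auto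
  have M2_groups: "H' \<noteq> {} \<and> H' \<subseteq> H" if "(H', y) \<in># M2" for H' y
  proof -
    have "D H' y \<in># \<Gamma>" unfolding \<Gamma> using that by (metis union_iff image_eqI set_image_mset case_prod_conv)
    moreover have "H' \<subseteq> G" using groups that by force
    ultimately show ?thesis
      using wf_sequent agts_subset_agtsM[of "D H' y" \<Gamma>] unfolding H_def by force
  qed
  have "left_box_instance H M2"
    unfolding left_box_instance_def
  proof (intro conjI)
    obtain H' y where "(H', y) \<in># M2" using False by (metis multiset_nonemptyE surj_pair)
    then show "H \<noteq> {}" using M2_groups by blast
    show "\<exists>\<Sigma>. \<Gamma> = \<Sigma> + image_mset (case_prod D) M2 \<and> (\<forall>x \<in># \<Sigma>. sigmaK_ok H x)"
      using \<Gamma> \<Sigma> sigmaK_ok_antimono[of G _ H] unfolding H_def by auto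
    show "a \<notin> H" using \<open>a \<notin> G\<close> by (simp add: H_def)
    show "H \<subseteq> agtsM \<Gamma>" by (simp add: H_def)
    show "M2 \<noteq> {#}" by (rule False)
    show "\<forall>(H', _) \<in># M2. H' \<subseteq> H" using M2_groups by blast
    show "\<forall>x \<in># \<Delta>. omega_ok x" using \<Omega> by simp
  qed
  then have "left_box_component H M2 \<in> components" unfolding components_def by blast
  moreover have "derivable L \<Pi> (add_mset (left_box_component H M2) \<Lambda>)"
  proof -
    have smaller: "smaller (image_mset snd M2) {#}"
      using smaller_boxes[OF \<Gamma>, of \<Delta> "{#}"] False by simp
    have "\<forall>y \<in># image_mset snd M1 + {#\<beta>#}. avoids p a y" using M1 \<open>avoids p a \<beta>\<close> by auto
    then have "derivable L (image_mset snd M1) (add_mset B {#\<beta>#})"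
      using smaller_uniform[OF smaller, of "image_mset snd M1" "{#\<beta>#}"] premise by (simp add: B_def)
    then have "derivable L (image_mset snd (add_mset (H, Neg B) M1)) {#\<beta>#}"
      by (simp add: derivable.negL)
    then have "derivable L (\<Sigma>1 + image_mset (case_prod D) (add_mset (H, Neg B) M1)) (add_mset (D G \<beta>) \<Lambda>0)"
      using groups \<Sigma> \<Omega> by (intro derivable_DK) (auto simp: H_def)
    then show ?thesis
      unfolding \<Pi> \<Lambda> left_box_component_def B_def by (simp add: derivable.negR)
  qed
  ultimately show ?thesis by (rule derivable_interpolant_R)
qed

lemma uniform_DD:
  assumes KD: "L = KD_D"
    and \<Pi>: "\<Pi> = \<Sigma>1 + image_mset (D {b}) \<Gamma>1" and \<Gamma>: "\<Gamma> = \<Sigma>2 + image_mset (D {b}) \<Gamma>2"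
    and premise: "derivable L (\<Gamma>1 + \<Gamma>2) {#}" and nonempty: "\<Gamma>1 + \<Gamma>2 \<noteq> {#}"
    and \<Sigma>: "\<forall>x \<in># \<Sigma>1 + \<Sigma>2. sigmaD_ok b x" and \<Omega>: "\<forall>x \<in># \<Delta> + \<Lambda>. omega_ok x"
    and avoids: "\<forall>x \<in># \<Pi> + \<Lambda>. avoids p a x"
  shows "derivable L \<Pi> (add_mset interpolant \<Lambda>)"
proof -
  consider (right) "\<Gamma>2 = {#}" | (left) "\<Gamma>1 = {#}" | (both) "\<Gamma>1 \<noteq> {#}" "\<Gamma>2 \<noteq> {#}" by blast
  then show ?thesis
  proof cases
    case right
    then have "derivable L \<Pi> \<Lambda>"
      unfolding \<Pi> using KD premise nonempty \<Sigma> \<Omega> by (intro derivable.DD) auto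
    then show ?thesis by (rule derivable_weaken(2))
  next
    case left
    then have "derivable L \<Gamma> \<Delta>"
      unfolding \<Gamma> using KD premise nonempty \<Sigma> \<Omega> by (intro derivable.DD) auto
    then show ?thesis by (rule derivable_sequent_imp_interpolant_R)
  next
    case both
    define M where "M = image_mset (Pair {b}) \<Gamma>2"
    define B where "B = f \<Gamma>2 {#}"
    have \<Gamma>_boxes: "\<Gamma> = \<Sigma>2 + image_mset (case_prod D) M" and snd_M: "image_mset snd M = \<Gamma>2"
      unfolding \<Gamma> M_def by (simp_all add: multiset.map_comp comp_def)
    have \<Gamma>1: "a \<noteq> b \<and> avoids p a y" if "y \<in># \<Gamma>1" for y
    proof -
      have "D {b} y \<in># \<Pi>" using that unfolding \<Pi> by simp
      then have "avoids p a (D {b} y)" using avoids by (metis union_iff)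
      then show ?thesis by simp
    qed
    have "left_box_instance {b} M"
      unfolding left_box_instance_def
    proof (intro conjI)
      show "a \<notin> {b}" using \<Gamma>1 both(1) by (metis multiset_nonemptyE singletonD)
      show "{b} \<subseteq> agtsM \<Gamma>" using both(2) agts_subset_agtsM unfolding \<Gamma>
        by (metis (no_types, lifting) agts.simps(7) image_eqI le_supE multiset_nonemptyE set_image_mset union_iff)
      show "\<exists>\<Sigma>. \<Gamma> = \<Sigma> + image_mset (case_prod D) M \<and> (\<forall>x \<in># \<Sigma>. sigmaK_ok {b} x)"
        using \<Gamma>_boxes \<Sigma> wf_sequent unfolding \<Gamma> by (auto intro: sigmaD_ok_imp_sigmaK_ok)
      show "\<forall>x \<in># \<Delta>. omega_ok x" using \<Omega> by simp
    qed (use both(2) in \<open>simp_all add: M_def\<close>)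
    then have "left_box_component {b} M \<in> components" unfolding components_def by blast
    moreover have "derivable L \<Pi> (add_mset (left_box_component {b} M) \<Lambda>)"
    proof -
      have smaller: "smaller \<Gamma>2 {#}"
        using smaller_boxes[OF \<Gamma>_boxes, of \<Delta> "{#}"] both(2) snd_M by (simp add: M_def)
      have "derivable L \<Gamma>1 {#B#}"
        using smaller_uniform[OF smaller, of \<Gamma>1 "{#}"] premise \<Gamma>1 by (simp add: B_def)
      then have "derivable L (\<Sigma>1 + image_mset (D {b}) (add_mset (Neg B) \<Gamma>1)) \<Lambda>"
        using KD \<Sigma> \<Omega> by (intro derivable.DD derivable.negL) auto
      then show ?thesis
        unfolding \<Pi> left_box_component_def snd_M B_def by (simp add: derivable.negR)
    qed
    ultimately show ?thesis by (rule derivable_interpolant_R)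
  qed
qed

lemma interpolant_uniform:
  assumes "derivable L S T" "S = \<Pi> + \<Gamma>" "T = \<Delta> + \<Lambda>" "\<forall>x \<in># \<Pi> + \<Lambda>. avoids p a x"
  shows "derivable L \<Pi> (add_mset interpolant \<Lambda>)"
  using assms
proof (induction arbitrary: \<Pi> \<Lambda> rule: derivable_induct)
  case (init q S T)
  then show ?case using uniform_init by blast
next
  case (botL S T)
  from botL.prems(1) show ?case
  proof (cases rule: add_mset_eq_plus_cases)
    case (first \<Pi>0)
    then show ?thesis by (simp add: derivable.botL)
  next
    case (second \<Gamma>0)
    then have "derivable L \<Gamma> \<Delta>" by (simp add: derivable.botL)
    then show ?thesis by (rule derivable_sequent_imp_interpolant_R)
  qed
next
  case (left x S T)
  from left.prems(1) show ?case
  proof (cases rule: add_mset_eq_plus_cases)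
    case (first \<Pi>0)
    have "derivable L (\<Gamma>' + \<Pi>0) (\<Delta>' + add_mset interpolant \<Lambda>)"
      if "(\<Gamma>', \<Delta>') \<in> set (left_premises x)" for \<Gamma>' \<Delta>'
    proof -
      have "\<forall>y \<in># (\<Gamma>' + \<Pi>0) + (\<Delta>' + \<Lambda>). avoids p a y"
        using avoids_premises[of \<Gamma>' \<Delta>' x] that left.prems(3) first by auto
      then show ?thesis using left.IH that left.prems(2) first by (auto simp: ac_simps)
    qed
    then show ?thesis unfolding first(1) using left.hyps by (intro derivable_left_rule) auto
  next
    case (second \<Gamma>0)
    then show ?thesis using left by (intro uniform_left_rule_principal_in_sequent) (auto simp: ac_simps)
  qed
next
  case (right x S T)
  from right.prems(2) show ?case
  proof (cases rule: add_mset_eq_plus_cases)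
    case (first \<Delta>0)
    then show ?thesis using right by (intro uniform_right_rule_principal_in_sequent) (auto simp: ac_simps)
  next
    case (second \<Lambda>0)
    have "derivable L (\<Gamma>' + \<Pi>) (\<Delta>' + add_mset interpolant \<Lambda>0)"
      if "(\<Gamma>', \<Delta>') \<in> set (right_premises x)" for \<Gamma>' \<Delta>'
    proof -
      have "\<forall>y \<in># (\<Gamma>' + \<Pi>) + (\<Delta>' + \<Lambda>0). avoids p a y"
        using avoids_premises[of \<Gamma>' \<Delta>' x] that right.prems(3) second by auto
      then show ?thesis using right.IH that right.prems(1) second by (auto simp: ac_simps)
    qed
    then have "derivable L \<Pi> (add_mset x (add_mset interpolant \<Lambda>0))"
      using right.hyps by (intro derivable_right_rule) auto
    then show ?thesis unfolding second(1) by (simp add: add_mset_commute)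
  qed
next
  case (DK M \<beta> G \<Sigma> \<Omega>)
  obtain \<Sigma>1 \<Sigma>2 M1 M2 where split: "\<Sigma> = \<Sigma>1 + \<Sigma>2" "M = M1 + M2"
    and \<Pi>: "\<Pi> = \<Sigma>1 + image_mset (case_prod D) M1" and \<Gamma>: "\<Gamma> = \<Sigma>2 + image_mset (case_prod D) M2"
    using plus_eq_plus_image_mset_split[OF DK.prems(1)] .
  from DK.prems(2) show ?case
  proof (cases rule: add_mset_eq_plus_cases)
    case (first \<Delta>0)
    then show ?thesis using DK.hyps DK.prems(3) split
      by (intro uniform_DK_principal_in_sequent[OF \<Pi> \<Gamma> first(1)]) auto
  next
    case (second \<Lambda>0)
    then show ?thesis using DK.hyps DK.prems(3) split
      by (intro uniform_DK_principal_in_context[OF \<Pi> \<Gamma> second(1)]) auto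
  qed
next
  case (DD \<Gamma>' \<Sigma> b \<Omega>)
  obtain \<Sigma>1 \<Sigma>2 \<Gamma>1 \<Gamma>2 where split: "\<Sigma> = \<Sigma>1 + \<Sigma>2" "\<Gamma>' = \<Gamma>1 + \<Gamma>2"
    and \<Pi>: "\<Pi> = \<Sigma>1 + image_mset (D {b}) \<Gamma>1" and \<Gamma>: "\<Gamma> = \<Sigma>2 + image_mset (D {b}) \<Gamma>2"
    using plus_eq_plus_image_mset_split[OF DD.prems(1)] .
  show ?case
    using DD.hyps DD.prems(2,3) split by (intro uniform_DD[OF _ \<Pi> \<Gamma>]) auto
qed

lemma uniform_interpolant_interpolant: "uniform_interpolant L p a \<Gamma> \<Delta> interpolant"
  using candidate_interpolant interpolant_uniform
  unfolding uniform_interpolant_def candidate_def in_signature_def by blast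

end

section \<open>Existence of uniform interpolants\<close>

lemma uniform_interpolant_exists:
  fixes \<Gamma> \<Delta> :: "('p, 'a::finite) fm multiset"
  assumes "\<forall>x \<in># \<Gamma> + \<Delta>. wf x"
  shows "\<exists>A. uniform_interpolant L p a \<Gamma> \<Delta> A"
  using assms
proof (induction "msize (\<Gamma> + \<Delta>)" arbitrary: \<Gamma> \<Delta> rule: less_induct)
  case less
  define f where "f \<Gamma>' \<Delta>' = (SOME A. uniform_interpolant L p a \<Gamma>' \<Delta>' A)" for \<Gamma>' \<Delta>'
  interpret interpolant_step L p a \<Gamma> \<Delta> f
  proof
    show "\<forall>x \<in># \<Gamma> + \<Delta>. wf x" by (rule less.prems)
    fix \<Gamma>' \<Delta>' :: "('p, 'a) fm multiset"
    assume "msize (\<Gamma>' + \<Delta>') < msize (\<Gamma> + \<Delta>)" "\<forall>x \<in># \<Gamma>' + \<Delta>'. wf x"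
    then have "\<exists>A. uniform_interpolant L p a \<Gamma>' \<Delta>' A" by (rule less.hyps)
    then show "uniform_interpolant L p a \<Gamma>' \<Delta>' (f \<Gamma>' \<Delta>')" unfolding f_def by (rule someI_ex)
  qed
  show ?case using uniform_interpolant_interpolant by blast
qed

theorem theorem5p5:
  fixes L :: logic
    and \<Gamma> \<Delta> :: "('p::countable, 'a::finite) fm multiset"
    and p :: 'p and a :: 'a
  assumes "\<forall>x \<in># \<Gamma> + \<Delta>. wf x"
  shows "\<exists>A. wf A
    \<and> vars A \<subseteq> varsM (\<Gamma> + \<Delta>) - {p}
    \<and> agts A \<subseteq> agtsM (\<Gamma> + \<Delta>) - {a}
    \<and> derivable L (add_mset A \<Gamma>) \<Delta>
    \<and> (\<forall>\<Pi> \<Lambda>. (\<forall>x \<in># \<Pi> + \<Lambda>. wf x)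
          \<longrightarrow> p \<notin> varsM (\<Pi> + \<Lambda>) \<longrightarrow> a \<notin> agtsM (\<Pi> + \<Lambda>)
          \<longrightarrow> derivable L (\<Pi> + \<Gamma>) (\<Delta> + \<Lambda>)
          \<longrightarrow> derivable L \<Pi> (add_mset A \<Lambda>))"
proof -
  obtain A where "uniform_interpolant L p a \<Gamma> \<Delta> A"
    using uniform_interpolant_exists[OF assms] by blast
  then show ?thesis unfolding uniform_interpolant_def avoids_mset_iff by blast
qed

end
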